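(* Let $(h,i)\in\mathbb D$ and let $\phi=\phi_h^{(i)}$. Then $$\chi_h^{(i)}\circ\phi=\big(\chi_{h+1}^{(2i-1)}+\chi_{h+1}^{(2i)}\big)/\sqrt2,$$ $$\chi_{h+1}^{(2i-1)}\circ\phi=\big(\sqrt2\chi_h^{(i)}+\chi_{h+1}^{(2i-1)}-\chi_{h+1}^{(2i)}\big)/2,$$ $$\chi_{h+1}^{(2i)}\circ\phi=\big(\sqrt2\chi_h^{(i)}-\chi_{h+1}^{(2i-1)}+\chi_{h+1}^{(2i)}\big)/2.$$ Moreover, $\chi_k^{(j)}\circ\phi=\chi_k^{(j+2^{k-h-2})}$ if $(k,j)\in\mathbb S_1$ and $\chi_k^{(j)}\circ\phi=\chi_k^{(j-2^{k-h-2})}$ if $(k,j)\in\mathbb S_2$. All remaining Haar functions $\chi_k^{(j)}$, $(k,j)\in\mathbb D\setminus(\{(h,i),(h+1,2i-1),(h+1,2i)\}\cup\mathbb S_1\cup\mathbb S_2)$, satisfy $\chi_k^{(j)}\circ\phi=\chi_k^{(j)}$.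
   Context: Dyadic intervals: $\Delta_k^{(j)}:=[\frac{j-1}{2^k},\frac{j}{2^k})$ for $k\ge0$. Haar functions: for $k\ge1$, integer $j$, $\chi_k^{(j)}(t)=+2^{(k-1)/2}$ on $\Delta_k^{(2j-1)}$, $-2^{(k-1)/2}$ on $\Delta_k^{(2j)}$, $0$ otherwise, $t\in[0,1)$. Dyadic tree $\mathbb D:=\{(k,j):k\ge1;\ j=1,\dots,2^{k-1}\}$. For $(h,i)\in\mathbb D$, $\phi_h^{(i)}:[0,1)\to[0,1)$ is defined by $\phi_h^{(i)}(t)=t+2^{-(h+1)}$ for $t\in\Delta_{h+1}^{(4i-2)}$, $\phi_h^{(i)}(t)=t-2^{-(h+1)}$ for $t\in\Delta_{h+1}^{(4i-1)}$, and $\phi_h^{(i)}(t)=t$ otherwise (it interchanges these two intervals). Subtrees: $\mathbb S_1:=\{(k,j)\in\mathbb D:\Delta_{k-1}^{(j)}\subseteq\Delta_{h+1}^{(4i-2)}\}$ and $\mathbb S_2:=\{(k,j)\in\mathbb D:\Delta_{k-1}^{(j)}\subseteq\Delta_{h+1}^{(4i-1)}\}$. *)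

theory Defs
  imports Complex_Main
begin

definition dyint :: "nat \<Rightarrow> int \<Rightarrow> real set" where
  "dyint k j = {real_of_int (j - 1) / 2 ^ k ..< real_of_int j / 2 ^ k}"

text \<open>Haar function chi_k^(j) on [0,1) (set to 0 outside [0,1)); intended for k >= 1.\<close>
definition haar :: "nat \<Rightarrow> int \<Rightarrow> real \<Rightarrow> real" where
  "haar k j t =
     (if t \<in> {0..<1} \<and> t \<in> dyint k (2 * j - 1) then 2 powr ((real k - 1) / 2)
      else if t \<in> {0..<1} \<and> t \<in> dyint k (2 * j) then - (2 powr ((real k - 1) / 2))
      else 0)"

definition dtree :: "(nat \<times> int) set" where
  "dtree = {(k, j). k \<ge> 1 \<and> 1 \<le> j \<and> j \<le> 2 ^ (k - 1)}"

definition phi :: "nat \<Rightarrow> int \<Rightarrow> real \<Rightarrow> real" where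
  "phi h i t =
     (if t \<in> dyint (h + 1) (4 * i - 2) then t + 1 / 2 ^ (h + 1)
      else if t \<in> dyint (h + 1) (4 * i - 1) then t - 1 / 2 ^ (h + 1)
      else t)"

definition S1 :: "nat \<Rightarrow> int \<Rightarrow> (nat \<times> int) set" where
  "S1 h i = {(k, j) \<in> dtree. dyint (k - 1) j \<subseteq> dyint (h + 1) (4 * i - 2)}"

definition S2 :: "nat \<Rightarrow> int \<Rightarrow> (nat \<times> int) set" where
  "S2 h i = {(k, j) \<in> dtree. dyint (k - 1) j \<subseteq> dyint (h + 1) (4 * i - 1)}"

end

theory Submission
  imports Defs
begin

text \<open>
  For \<open>t \<in> [0,1)\<close> let \<open>n = \<lfloor>t * 2 ^ K\<rfloor>\<close> be the index of the dyadic cell of level \<open>K\<close>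
  containing \<open>t\<close>. A Haar function of level \<open>k \<le> K\<close> depends on \<open>t\<close> only through
  \<open>n div 2 ^ (K - k)\<close>, and for \<open>K \<ge> h + 1\<close> the map \<open>phi h i\<close> acts on \<open>n\<close> by exchanging
  the two adjacent blocks of \<open>2 ^ (K - h - 1)\<close> cells that make up the two swapped intervals.
  So every identity becomes a statement about integer division, settled level by level:
  levels below \<open>h\<close> do not see the exchange, at levels \<open>h\<close> and \<open>h + 1\<close> it is the
  transposition of the two middle cells of level \<open>h + 1\<close> in the support of \<open>haar h i\<close>,
  and at deeper levels it translates the indices \<open>j\<close> of the Haar functions supported in
  the two intervals by \<open>\<plusminus>2 ^ (k - h - 2)\<close>.
\<close>

lemma mem_dyint_iff_floor: "t \<in> dyint k j \<longleftrightarrow> \<lfloor>t * 2 ^ k\<rfloor> = j - 1"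
  unfolding dyint_def by (simp add: floor_eq_iff pos_divide_le_eq pos_less_divide_eq)

lemma int_div_eq_iff: "0 < (b::int) \<Longrightarrow> n div b = q \<longleftrightarrow> q * b \<le> n \<and> n < q * b + b"
proof
  assume "0 < b" "n div b = q"
  moreover have "q * b + n mod b = n" using div_mult_mod_eq[of n b] \<open>n div b = q\<close> by simp
  ultimately show "q * b \<le> n \<and> n < q * b + b"
    using pos_mod_sign[of b n] pos_mod_bound[of b n] by linarith
next
  assume "0 < b" "q * b \<le> n \<and> n < q * b + b"
  then show "n div b = q"
    by (intro int_div_pos_eq[where r = "n - b * q"]) (auto simp: mult.commute)
qed

lemma floor_mult_power2_div:
  fixes t :: real
  assumes "k \<le> K"
  shows "\<lfloor>t * 2 ^ k\<rfloor> = \<lfloor>t * 2 ^ K\<rfloor> div 2 ^ (K - k)"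
proof -
  have "(2::real) ^ K = 2 ^ k * 2 ^ (K - k)"
    using assms by (simp flip: power_add)
  then have "t * 2 ^ k = t * 2 ^ K / of_int (2 ^ (K - k))"
    by simp
  then show ?thesis
    by (simp add: floor_divide_real_eq_div del: of_int_power)
qed

lemma mem_unit_iff_floor: "(t::real) \<in> {0..<1} \<longleftrightarrow> \<lfloor>t * 2 ^ K\<rfloor> \<in> {0..<2 ^ K}"
proof -
  have "t \<in> {0..<1} \<longleftrightarrow> \<lfloor>t\<rfloor> = 0" by (auto simp: floor_eq_iff)
  also have "\<dots> \<longleftrightarrow> \<lfloor>t * 2 ^ K\<rfloor> div 2 ^ K = 0"
    using floor_mult_power2_div[of 0 K t] by simp
  also have "\<dots> \<longleftrightarrow> \<lfloor>t * 2 ^ K\<rfloor> \<in> {0..<2 ^ K}"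
    by (subst int_div_eq_iff) auto
  finally show ?thesis .
qed

lemma dyint_subset_dyint_iff:
  "dyint p j \<subseteq> dyint q l \<longleftrightarrow> q \<le> p \<and> (j - 1) div 2 ^ (p - q) = l - 1"
proof -
  define t :: real where "t = of_int (j - 1) / 2 ^ p"
  have t: "\<lfloor>t * 2 ^ p\<rfloor> = j - 1" by (simp add: t_def)
  then have "t \<in> dyint p j" by (simp add: mem_dyint_iff_floor)
  show ?thesis
  proof (cases "q \<le> p")
    case True
    then have "s \<in> dyint q l \<longleftrightarrow> \<lfloor>s * 2 ^ p\<rfloor> div 2 ^ (p - q) = l - 1" for s :: real
      by (simp add: mem_dyint_iff_floor floor_mult_power2_div[OF True])
    then show ?thesis
      using True t \<open>t \<in> dyint p j\<close> by (auto simp: mem_dyint_iff_floor)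
  next
    case False
    define t' where "t' = t + 1 / 2 ^ q"
    have "\<lfloor>t' * 2 ^ q\<rfloor> = \<lfloor>t * 2 ^ q\<rfloor> + 1"
      by (simp add: t'_def distrib_right)
    moreover have "t' \<in> dyint p j"
    proof -
      have "(1::real) / 2 ^ q < 1 / 2 ^ p" using False by (simp add: divide_strict_left_mono)
      then show ?thesis using \<open>t \<in> dyint p j\<close> by (auto simp: t'_def t_def dyint_def diff_divide_distrib)
    qed
    ultimately have "\<not> (t \<in> dyint q l \<and> t' \<in> dyint q l)"
      by (simp add: mem_dyint_iff_floor)
    then show ?thesis
      using False \<open>t \<in> dyint p j\<close> \<open>t' \<in> dyint p j\<close> by blast
  qed
qed

text \<open>The value of \<open>haar k j\<close> on the cell \<open>[n / 2 ^ k, (n + 1) / 2 ^ k)\<close>.\<close>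
definition haar_cell :: "nat \<Rightarrow> int \<Rightarrow> int \<Rightarrow> real" where
  "haar_cell k j n =
     (if n = 2 * j - 2 then 2 powr ((real k - 1) / 2)
      else if n = 2 * j - 1 then - (2 powr ((real k - 1) / 2))
      else 0)"

lemma haar_cell_Suc: "haar_cell (Suc k) j n = sqrt 2 * haar_cell k j n"
proof -
  have "2 powr ((real (Suc k) - 1) / 2) = 2 powr (1 / 2 + (real k - 1) / 2)"
    by (rule arg_cong[where f = "(powr) 2"]) (simp add: field_simps)
  also have "\<dots> = sqrt 2 * 2 powr ((real k - 1) / 2)"
    by (simp only: powr_add powr_half_sqrt)
  finally show ?thesis by (simp add: haar_cell_def)
qed

lemma haar_eq_haar_cell:
  assumes "t \<in> {0..<1}" "k \<le> K"
  shows "haar k j t = haar_cell k j (\<lfloor>t * 2 ^ K\<rfloor> div 2 ^ (K - k))"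
  using assms unfolding haar_def haar_cell_def
  by (simp add: mem_dyint_iff_floor floor_mult_power2_div[OF assms(2)])

text \<open>
  Exchanges the integer blocks \<open>[q * b, (q + 1) * b)\<close> and \<open>[(q + 1) * b, (q + 2) * b)\<close>;
  by \<open>floor_phi\<close> this is how \<open>phi h i\<close> acts on cell indices.
\<close>
definition block_swap :: "int \<Rightarrow> int \<Rightarrow> int \<Rightarrow> int" where
  "block_swap b q n = (if n div b = q then n + b else if n div b = q + 1 then n - b else n)"

lemma block_swap_mem_range:
  assumes "0 < b" "0 \<le> q" "(q + 2) * b \<le> N" "n \<in> {0..<N}"
  shows "block_swap b q n \<in> {0..<N}"
proof -
  have "0 \<le> q * b" using assms by simp
  with assms show ?thesis
    unfolding block_swap_def int_div_eq_iff[OF \<open>0 < b\<close>] atLeastLessThan_iff distrib_right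
    by (smt (verit))
qed

lemma floor_phi:
  assumes "h + 1 \<le> K"
  shows "\<lfloor>phi h i t * 2 ^ K\<rfloor> = block_swap (2 ^ (K - h - 1)) (4 * i - 3) \<lfloor>t * 2 ^ K\<rfloor>"
proof -
  have mem: "t \<in> dyint (h + 1) l \<longleftrightarrow> \<lfloor>t * 2 ^ K\<rfloor> div 2 ^ (K - h - 1) = l - 1" for l
    unfolding mem_dyint_iff_floor floor_mult_power2_div[OF assms] by simp
  have shift: "\<lfloor>(t + of_int c / 2 ^ (h + 1)) * 2 ^ K\<rfloor> = \<lfloor>t * 2 ^ K\<rfloor> + c * 2 ^ (K - h - 1)" for c
  proof -
    have "(2::real) ^ K = 2 ^ ((h + 1) + (K - h - 1))"
      using assms by simp
    then have "(2::real) ^ K = 2 ^ (h + 1) * 2 ^ (K - h - 1)"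
      by (simp only: power_add)
    then have "(t + of_int c / 2 ^ (h + 1)) * 2 ^ K = t * 2 ^ K + of_int (c * 2 ^ (K - h - 1))"
      by (simp add: field_simps)
    then show ?thesis by (simp only: floor_add_int)
  qed
  have up: "\<lfloor>(t + 1 / 2 ^ (h + 1)) * 2 ^ K\<rfloor> = \<lfloor>t * 2 ^ K\<rfloor> + 2 ^ (K - h - 1)"
    using shift[of 1] by (simp only: of_int_1 mult_1)
  have down: "\<lfloor>(t - 1 / 2 ^ (h + 1)) * 2 ^ K\<rfloor> = \<lfloor>t * 2 ^ K\<rfloor> - 2 ^ (K - h - 1)"
    using shift[of "-1"]
    by (simp only: of_int_minus of_int_1 minus_divide_left diff_conv_add_uminus mult_minus_left mult_1)
  show ?thesis
  proof (cases "t \<in> dyint (h + 1) (4 * i - 2)")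
    case True
    then show ?thesis unfolding phi_def if_P[OF True] up using mem by (simp add: block_swap_def)
  next
    case False
    then show ?thesis
    proof (cases "t \<in> dyint (h + 1) (4 * i - 1)")
      case True
      then show ?thesis unfolding phi_def if_not_P[OF \<open>t \<notin> _\<close>] if_P[OF True] down
        using mem by (simp add: block_swap_def)
    next
      case False
      then show ?thesis
        using \<open>t \<notin> dyint (h + 1) (4 * i - 2)\<close> mem by (simp add: phi_def block_swap_def)
    qed
  qed
qed

lemma phi_mem_unit:
  assumes "(h, i) \<in> dtree" "t \<in> {0..<1}"
  shows "phi h i t \<in> {0..<1}"
proof -
  have "1 \<le> h" "1 \<le> i" "i \<le> 2 ^ (h - 1)"
    using assms(1) by (auto simp: dtree_def)
  have "(2::int) ^ (h + 1) = 2 ^ (2 + (h - 1))"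
    using \<open>1 \<le> h\<close> by simp
  then have "(2::int) ^ (h + 1) = 4 * 2 ^ (h - 1)"
    by (simp only: power_add) simp
  with \<open>i \<le> 2 ^ (h - 1)\<close> have "4 * i - 1 \<le> (2::int) ^ (h + 1)"
    by simp
  then show ?thesis
    using assms(2) block_swap_mem_range[of 1 "4 * i - 3" "2 ^ (h + 1)" "\<lfloor>t * 2 ^ (h + 1)\<rfloor>"]
    unfolding mem_unit_iff_floor[of _ "h + 1"] floor_phi[OF order_refl]
    using \<open>1 \<le> i\<close> by simp
qed

lemma haar_comp_phi_eq_haar_cell:
  assumes "(h, i) \<in> dtree" "t \<in> {0..<1}" "h + 1 \<le> K" "k \<le> K"
  shows "haar k j (phi h i t)
    = haar_cell k j (block_swap (2 ^ (K - h - 1)) (4 * i - 3) \<lfloor>t * 2 ^ K\<rfloor> div 2 ^ (K - k))"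
  unfolding haar_eq_haar_cell[OF phi_mem_unit[OF assms(1,2)] assms(4)] floor_phi[OF assms(3)] ..

text \<open>
  The block size \<open>2 * a\<close> is even, so the pair of cells \<open>2 * j - 2, 2 * j - 1\<close> supporting
  \<open>haar_cell k j\<close> is moved as a whole.
\<close>
lemma haar_cell_block_swap_shift_up:
  assumes "0 < a" "(j - 1) div a = q"
  shows "haar_cell k j (block_swap (2 * a) q n) = haar_cell k (j + a) n"
  using assms by (auto simp: haar_cell_def block_swap_def int_div_eq_iff algebra_simps)

lemma haar_cell_block_swap_shift_down:
  assumes "0 < a" "(j - 1) div a = q + 1"
  shows "haar_cell k j (block_swap (2 * a) q n) = haar_cell k (j - a) n"
  using assms by (auto simp: haar_cell_def block_swap_def int_div_eq_iff algebra_simps)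

lemma haar_cell_block_swap_outside:
  assumes "0 < a" "(j - 1) div a \<noteq> q" "(j - 1) div a \<noteq> q + 1"
  shows "haar_cell k j (block_swap (2 * a) q n) = haar_cell k j n"
  using assms by (auto simp: haar_cell_def block_swap_def int_div_eq_iff algebra_simps)

lemma block_swap_one:
  "block_swap 1 (4 * i - 3) n =
     (if n = 4 * i - 3 then 4 * i - 2 else if n = 4 * i - 2 then 4 * i - 3 else n)"
  by (simp add: block_swap_def)

lemma haar_cell_block_swap_one:
  "j \<noteq> 2 * i - 1 \<Longrightarrow> j \<noteq> 2 * i \<Longrightarrow> haar_cell k j (block_swap 1 (4 * i - 3) n) = haar_cell k j n"
  by (auto simp: haar_cell_def block_swap_one)

lemma block_swap_one_div4: "block_swap 1 (4 * i - 3) n div 4 = n div 4"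
proof -
  have "(4 * i - 3) div 4 = (4 * i - 2) div 4" by presburger
  then show ?thesis by (simp add: block_swap_one)
qed

lemma haar_cell_block_swap_one_div2:
  assumes "j \<noteq> i"
  shows "haar_cell k j (block_swap 1 (4 * i - 3) n div 2) = haar_cell k j (n div 2)"
proof -
  have "(4 * i - 3) div 2 = 2 * i - 2" "(4 * i - 2) div 2 = 2 * i - 1" by presburger+
  with assms show ?thesis by (auto simp: haar_cell_def block_swap_one)
qed

lemma haar_cell_block_swap_pair:
  fixes i n :: int
  defines "m \<equiv> block_swap 1 (4 * i - 3) n"
  shows "haar_cell h i (m div 2) = (haar_cell (Suc h) (2 * i - 1) n + haar_cell (Suc h) (2 * i) n) / sqrt 2"
      (is ?parent)
    and "haar_cell (Suc h) (2 * i - 1) m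
      = (sqrt 2 * haar_cell h i (n div 2) + haar_cell (Suc h) (2 * i - 1) n - haar_cell (Suc h) (2 * i) n) / 2"
      (is ?left)
    and "haar_cell (Suc h) (2 * i) m
      = (sqrt 2 * haar_cell h i (n div 2) - haar_cell (Suc h) (2 * i - 1) n + haar_cell (Suc h) (2 * i) n) / 2"
      (is ?right)
proof -
  have "n \<in> {4 * i - 4, 4 * i - 3, 4 * i - 2, 4 * i - 1} \<or> n \<notin> {4 * i - 4 .. 4 * i - 1}"
    by auto
  then show ?parent ?left ?right
    unfolding haar_cell_Suc by (auto simp: m_def block_swap_one haar_cell_def int_div_eq_iff)
qed

lemma haar_pair_comp_phi:
  assumes hi: "(h, i) \<in> dtree" and t: "t \<in> {0..<1}"
  shows "haar h i (phi h i t) = (haar (h + 1) (2 * i - 1) t + haar (h + 1) (2 * i) t) / sqrt 2"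
      (is ?parent)
    and "haar (h + 1) (2 * i - 1) (phi h i t)
      = (sqrt 2 * haar h i t + haar (h + 1) (2 * i - 1) t - haar (h + 1) (2 * i) t) / 2"
      (is ?left)
    and "haar (h + 1) (2 * i) (phi h i t)
      = (sqrt 2 * haar h i t - haar (h + 1) (2 * i - 1) t + haar (h + 1) (2 * i) t) / 2"
      (is ?right)
proof -
  define n where "n = \<lfloor>t * 2 ^ (h + 1)\<rfloor>"
  have parent: "haar h j t = haar_cell h j (n div 2)"
    and parent_phi: "haar h j (phi h i t) = haar_cell h j (block_swap 1 (4 * i - 3) n div 2)"
    and child: "haar (h + 1) j t = haar_cell (Suc h) j n"
    and child_phi: "haar (h + 1) j (phi h i t) = haar_cell (Suc h) j (block_swap 1 (4 * i - 3) n)" for j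
    using haar_eq_haar_cell[OF t, of h "h + 1"] haar_eq_haar_cell[OF t, of "h + 1" "h + 1"]
      haar_comp_phi_eq_haar_cell[OF hi t, of "h + 1" h] haar_comp_phi_eq_haar_cell[OF hi t, of "h + 1" "h + 1"]
    by (simp_all add: n_def)
  show ?parent ?left ?right
    unfolding parent parent_phi child child_phi by (rule haar_cell_block_swap_pair)+
qed

lemma haar_comp_phi_deep:
  assumes "(h, i) \<in> dtree" "t \<in> {0..<1}" "h + 2 \<le> k"
  shows "haar k j (phi h i t)
    = haar_cell k j (block_swap (2 * 2 ^ (k - h - 2)) (4 * i - 3) \<lfloor>t * 2 ^ k\<rfloor>)"
proof -
  have "k - h - 1 = Suc (k - h - 2)" using assms(3) by simp
  then show ?thesis
    using haar_comp_phi_eq_haar_cell[OF assms(1,2), of k k j] assms(3) by simp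
qed

lemma haar_comp_phi_S1:
  assumes "(h, i) \<in> dtree" "(k, j) \<in> S1 h i" "t \<in> {0..<1}"
  shows "haar k j (phi h i t) = haar k (j + 2 ^ (k - h - 2)) t"
proof -
  have "h + 1 \<le> k - 1" "(j - 1) div 2 ^ (k - h - 2) = 4 * i - 3"
    using assms(2) by (auto simp: S1_def dyint_subset_dyint_iff)
  then show ?thesis
    using haar_comp_phi_deep[OF assms(1,3)] haar_cell_block_swap_shift_up
      haar_eq_haar_cell[OF assms(3) order_refl] by simp
qed

lemma haar_comp_phi_S2:
  assumes "(h, i) \<in> dtree" "(k, j) \<in> S2 h i" "t \<in> {0..<1}"
  shows "haar k j (phi h i t) = haar k (j - 2 ^ (k - h - 2)) t"
proof -
  have "h + 1 \<le> k - 1" "(j - 1) div 2 ^ (k - h - 2) = 4 * i - 3 + 1"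
    using assms(2) by (auto simp: S2_def dyint_subset_dyint_iff)
  then show ?thesis
    using haar_comp_phi_deep[OF assms(1,3)] haar_cell_block_swap_shift_down
      haar_eq_haar_cell[OF assms(3) order_refl] by simp
qed

lemma haar_comp_phi_other:
  assumes hi: "(h, i) \<in> dtree" and t: "t \<in> {0..<1}"
    and "(k, j) \<notin> S1 h i" "(k, j) \<notin> S2 h i" "(k, j) \<in> dtree"
    and "(k, j) \<notin> {(h, i), (h + 1, 2 * i - 1), (h + 1, 2 * i)}"
  shows "haar k j (phi h i t) = haar k j t"
proof -
  define n where "n = \<lfloor>t * 2 ^ (h + 1)\<rfloor>"
  have shallow: "haar k j (phi h i t) = haar_cell k j (block_swap 1 (4 * i - 3) n div 2 ^ (h + 1 - k))"
    "haar k j t = haar_cell k j (n div 2 ^ (h + 1 - k))" if "k \<le> h + 1"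
    using haar_comp_phi_eq_haar_cell[OF hi t order_refl that] haar_eq_haar_cell[OF t that]
    by (simp_all add: n_def)
  consider "h + 2 \<le> k" | "k = h + 1" | "k = h" | "k < h" by linarith
  then show ?thesis
  proof cases
    case 1
    then have "(j - 1) div 2 ^ (k - h - 2) \<noteq> 4 * i - 3" "(j - 1) div 2 ^ (k - h - 2) \<noteq> 4 * i - 3 + 1"
      using assms(3-5) by (auto simp: S1_def S2_def dyint_subset_dyint_iff)
    then show ?thesis
      using haar_comp_phi_deep[OF hi t 1] haar_cell_block_swap_outside
        haar_eq_haar_cell[OF t order_refl] by simp
  next
    case 2
    then show ?thesis
      using shallow assms(6) haar_cell_block_swap_one by simp
  next
    case 3
    then show ?thesis
      using shallow assms(6) haar_cell_block_swap_one_div2 by simp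
  next
    case 4
    then have "h + 1 - k = 2 + (h - 1 - k)" by simp
    then have "(2::int) ^ (h + 1 - k) = 4 * 2 ^ (h - 1 - k)"
      by (simp only: power_add) simp
    then show ?thesis
      using shallow block_swap_one_div4 4 by (simp add: zdiv_zmult2_eq)
  qed
qed

theorem lemma3p3:
  fixes h :: nat and i :: int
  assumes hi: "(h, i) \<in> dtree"
  shows
   "(\<forall>t\<in>{0..<1::real}. haar h i (phi h i t)
        = (haar (h + 1) (2 * i - 1) t + haar (h + 1) (2 * i) t) / sqrt 2)
  \<and> (\<forall>t\<in>{0..<1::real}. haar (h + 1) (2 * i - 1) (phi h i t)
        = (sqrt 2 * haar h i t + haar (h + 1) (2 * i - 1) t - haar (h + 1) (2 * i) t) / 2)
  \<and> (\<forall>t\<in>{0..<1::real}. haar (h + 1) (2 * i) (phi h i t)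
        = (sqrt 2 * haar h i t - haar (h + 1) (2 * i - 1) t + haar (h + 1) (2 * i) t) / 2)
  \<and> (\<forall>(k, j)\<in>S1 h i. \<forall>t\<in>{0..<1::real}.
        haar k j (phi h i t) = haar k (j + 2 ^ (k - h - 2)) t)
  \<and> (\<forall>(k, j)\<in>S2 h i. \<forall>t\<in>{0..<1::real}.
        haar k j (phi h i t) = haar k (j - 2 ^ (k - h - 2)) t)
  \<and> (\<forall>(k, j)\<in>dtree - ({(h, i), (h + 1, 2 * i - 1), (h + 1, 2 * i)} \<union> S1 h i \<union> S2 h i).
        \<forall>t\<in>{0..<1::real}. haar k j (phi h i t) = haar k j t)"
  using haar_pair_comp_phi[OF hi] haar_comp_phi_S1[OF hi] haar_comp_phi_S2[OF hi]
    haar_comp_phi_other[OF hi]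
  by fast

end
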